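(* Let $G=(S,\Sigma,u,\{A_\sigma\}_{\sigma\in\Sigma},v)$ be a $k$-state GFA over a finite alphabet $\Sigma$ and let $\lambda\in\mathbb R$. Then there exists a one-way PFA $P$ over the same alphabet $\Sigma$ with at most $2k+6$ states such that for every word $w\in\Sigma^\ast$, \[ f_P(w)>\tfrac12 \iff f_G(w)>\lambda. \]
   Context: Let $\Sigma$ be a finite alphabet and $\Sigma^\ast$ the set of finite words over it. A generalized finite automaton (GFA) over $\Sigma$ with $k$ states is a tuple $G=(S,\Sigma,u,\{A_\sigma\}_{\sigma\in\Sigma},v)$ with $|S|=k$, $u\in\mathbb R^{1\times k}$ a row vector, each $A_\sigma\in\mathbb R^{k\times k}$ an arbitrary real matrix, and $v\in\mathbb R^{k\times 1}$ a column vector; for $w=\sigma_1\cdots\sigma_m$ its value is $f_G(w)=uA_{\sigma_1}\cdots A_{\sigma_m}v$ (so $f_G(\varepsilon)=uv$). A one-way PFA (probabilistic finite automaton, end-marker model) over $\Sigma$ is a tuple $P=(S',\Sigma,\pi,\{P_\sigma\}_{\sigma\in\Sigma},P_{\#},F)$, where $S'$ is a finite state set (its number of states is $|S'|$), $\pi$ is an initial probability distribution (row vector) on $S'$, each $P_\sigma$ and $P_\#$ are row-stochastic $|S'|\times|S'|$ matrices, and $F\subseteq S'$. For $w=\sigma_1\cdots\sigma_m$, $f_P(w)=\pi P_{\sigma_1}\cdots P_{\sigma_m}P_\#\mathbf 1_F$, where $\mathbf 1_F$ is the indicator column vector of $F$. *)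

theory Defs
  imports "Jordan_Normal_Form.Matrix"
begin

definition word_prod :: "nat \<Rightarrow> ('a \<Rightarrow> real mat) \<Rightarrow> 'a list \<Rightarrow> real mat" where
  "word_prod n M w = foldr (\<lambda>\<sigma> X. M \<sigma> * X) w (1\<^sub>m n)"

definition is_gfa :: "nat \<Rightarrow> real vec \<Rightarrow> ('a \<Rightarrow> real mat) \<Rightarrow> real vec \<Rightarrow> bool" where
  "is_gfa k u A v \<longleftrightarrow> u \<in> carrier_vec k \<and> v \<in> carrier_vec k \<and> (\<forall>\<sigma>. A \<sigma> \<in> carrier_mat k k)"

definition gfa_fun :: "nat \<Rightarrow> real vec \<Rightarrow> ('a \<Rightarrow> real mat) \<Rightarrow> real vec \<Rightarrow> 'a list \<Rightarrow> real" where
  "gfa_fun k u A v w = u \<bullet> (word_prod k A w *\<^sub>v v)"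

definition prob_vec :: "nat \<Rightarrow> real vec \<Rightarrow> bool" where
  "prob_vec n p \<longleftrightarrow> p \<in> carrier_vec n \<and> (\<forall>i<n. p $ i \<ge> 0) \<and> (\<Sum>i<n. p $ i) = 1"

definition row_stochastic :: "nat \<Rightarrow> real mat \<Rightarrow> bool" where
  "row_stochastic n M \<longleftrightarrow> M \<in> carrier_mat n n \<and>
     (\<forall>i<n. \<forall>j<n. M $$ (i, j) \<ge> 0) \<and> (\<forall>i<n. (\<Sum>j<n. M $$ (i, j)) = 1)"

text \<open>A one-way PFA (end-marker model) with state set {0..<n}.\<close>
definition is_pfa :: "nat \<Rightarrow> real vec \<Rightarrow> ('a \<Rightarrow> real mat) \<Rightarrow> real mat \<Rightarrow> nat set \<Rightarrow> bool" where
  "is_pfa n \<pi> P Pend F \<longleftrightarrow> prob_vec n \<pi> \<and> (\<forall>\<sigma>. row_stochastic n (P \<sigma>)) \<and>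
     row_stochastic n Pend \<and> F \<subseteq> {0..<n}"

definition indicator_vec :: "nat \<Rightarrow> nat set \<Rightarrow> real vec" where
  "indicator_vec n F = vec n (\<lambda>i. if i \<in> F then 1 else 0)"

definition pfa_fun :: "nat \<Rightarrow> real vec \<Rightarrow> ('a \<Rightarrow> real mat) \<Rightarrow> real mat \<Rightarrow> nat set \<Rightarrow> 'a list \<Rightarrow> real" where
  "pfa_fun n \<pi> P Pend F w = \<pi> \<bullet> ((word_prod n P w * Pend) *\<^sub>v indicator_vec n F)"

end

theory Submission
  imports Defs
begin

text \<open>Adjoining one state turns \<open>G\<close> into a GFA computing \<open>f\<^sub>G(w) - \<lambda>\<close>, so it suffices to
  simulate the sign of a GFA \<open>(u, B, v)\<close> with \<open>m\<close> states. Split every \<open>B\<^sub>\<sigma>\<close> into its positive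
  and negative parts and let \<open>2m\<close> states carry the vector \<open>B\<^sub>w v\<close> with both signs. Dividing by
  a constant \<open>c\<close> that dominates all absolute row sums makes these transitions substochastic;
  the missing mass goes to an absorbing sink. As the resulting matrices are stochastic they fix
  the constant vector \<open>1/2\<close>, so the acceptance vector stays of the form
  \<open>1/2 + \<epsilon> c^-|w| (B\<^sub>w v, -B\<^sub>w v, 0, 0)\<close>, and the initial distribution, built from the
  positive and negative parts of \<open>u\<close>, yields \<open>f\<^sub>P(w) = 1/2 + (positive factor) * f\<^sub>G(w)\<close>.\<close>

lemma word_prod_Nil [simp]: "word_prod n M [] = 1\<^sub>m n"
  by (simp add: word_prod_def)

lemma word_prod_Cons [simp]: "word_prod n M (\<sigma> # w) = M \<sigma> * word_prod n M w"
  by (simp add: word_prod_def)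

lemma word_prod_carrier:
  "(\<And>\<sigma>. M \<sigma> \<in> carrier_mat n n) \<Longrightarrow> word_prod n M w \<in> carrier_mat n n"
  by (induction w) (auto intro!: mult_carrier_mat)

lemma word_prod_Cons_mult_vec:
  assumes "\<And>\<sigma>. M \<sigma> \<in> carrier_mat n n" and "x \<in> carrier_vec n"
  shows "word_prod n M (\<sigma> # w) *\<^sub>v x = M \<sigma> *\<^sub>v (word_prod n M w *\<^sub>v x)"
proof -
  have "word_prod n M w \<in> carrier_mat n n"
    using assms(1) by (rule word_prod_carrier)
  then show ?thesis
    using assms by (simp add: assoc_mult_mat_vec[of _ n n])
qed

lemma sum_lessThan_add_split:
  "(\<Sum>j<m + n. f j) = (\<Sum>j<m. f j) + (\<Sum>j<n. f (m + j))" for m n :: nat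
  by (induction n) (simp_all add: add.assoc)

lemma max_pos_neg_parts:
  fixes a :: real
  shows "max a 0 + max (- a) 0 = \<bar>a\<bar>" and "max a 0 - max (- a) 0 = a"
  by auto

lemma mult_vec_entry:
  assumes "M \<in> carrier_mat n n'" "x \<in> carrier_vec n'" "i < n"
  shows "(M *\<^sub>v x) $ i = (\<Sum>j<n'. M $$ (i, j) * x $ j)"
  using assms by (simp add: scalar_prod_def atLeast0LessThan)

lemma row_stochastic_mult_const_vec:
  assumes "row_stochastic n M"
  shows "M *\<^sub>v vec n (\<lambda>_. a) = vec n (\<lambda>_. a)"
proof (rule eq_vecI)
  fix i assume "i < dim_vec (vec n (\<lambda>_. a))"
  then have "i < n" by simp
  moreover have "M \<in> carrier_mat n n"
    using assms by (simp add: row_stochastic_def)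
  ultimately have "(M *\<^sub>v vec n (\<lambda>_. a)) $ i = (\<Sum>j<n. M $$ (i, j)) * a"
    by (simp add: scalar_prod_def atLeast0LessThan sum_distrib_right)
  then show "(M *\<^sub>v vec n (\<lambda>_. a)) $ i = vec n (\<lambda>_. a) $ i"
    using assms \<open>i < n\<close> by (simp add: row_stochastic_def)
qed (use assms in \<open>auto simp: row_stochastic_def\<close>)

lemma prob_vec_scalar_const_vec:
  assumes "prob_vec n \<pi>"
  shows "\<pi> \<bullet> vec n (\<lambda>_. a) = a"
  using assms by (simp add: prob_vec_def scalar_prod_def atLeast0LessThan sum_distrib_right[symmetric])

lemma pfa_fun_const_plus_scaled:
  assumes \<pi>: "prob_vec n \<pi>" and P: "\<And>\<sigma>. row_stochastic n (P \<sigma>)"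
    and Pend: "Pend \<in> carrier_mat n n" and z: "\<And>w. z w \<in> carrier_vec n"
    and Pend_F: "Pend *\<^sub>v indicator_vec n F = vec n (\<lambda>_. a) + e \<cdot>\<^sub>v z []"
    and P_z: "\<And>\<sigma> w. P \<sigma> *\<^sub>v z w = r \<cdot>\<^sub>v z (\<sigma> # w)"
  shows "pfa_fun n \<pi> P Pend F w = a + e * r ^ length w * (\<pi> \<bullet> z w)"
proof -
  have P_carrier: "P \<sigma> \<in> carrier_mat n n" for \<sigma>
    using P by (simp add: row_stochastic_def)
  have F_carrier: "indicator_vec n F \<in> carrier_vec n"
    by (simp add: indicator_vec_def)
  have accept: "(word_prod n P w * Pend) *\<^sub>v indicator_vec n F
      = vec n (\<lambda>_. a) + (e * r ^ length w) \<cdot>\<^sub>v z w" for w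
  proof (induction w)
    case Nil
    then show ?case using Pend Pend_F by simp
  next
    case (Cons \<sigma> w)
    have W: "word_prod n P w \<in> carrier_mat n n"
      by (rule word_prod_carrier[OF P_carrier])
    have "(word_prod n P (\<sigma> # w) * Pend) *\<^sub>v indicator_vec n F
        = P \<sigma> *\<^sub>v ((word_prod n P w * Pend) *\<^sub>v indicator_vec n F)"
      by (simp only: word_prod_Cons assoc_mult_mat[OF P_carrier W Pend]
          assoc_mult_mat_vec[OF P_carrier mult_carrier_mat[OF W Pend] F_carrier])
    also have "\<dots> = P \<sigma> *\<^sub>v (vec n (\<lambda>_. a) + (e * r ^ length w) \<cdot>\<^sub>v z w)"
      by (simp only: Cons.IH)
    also have "\<dots> = vec n (\<lambda>_. a) + (e * r ^ length (\<sigma> # w)) \<cdot>\<^sub>v z (\<sigma> # w)"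
      using P_carrier[of \<sigma>] z[of w]
      by (simp add: mult_add_distrib_mat_vec mult_mat_vec row_stochastic_mult_const_vec[OF P] P_z
          smult_smult_assoc mult.assoc mult.commute[of r])
    finally show ?case .
  qed
  have "\<pi> \<in> carrier_vec n"
    using \<pi> by (simp add: prob_vec_def)
  then show ?thesis
    unfolding pfa_fun_def accept using z[of w]
    by (simp add: scalar_prod_add_distrib[of \<pi> n] prob_vec_scalar_const_vec[OF \<pi>])
qed

lemma gfa_shift_by_const:
  assumes "is_gfa k u A v"
  shows "\<exists>u' A' v'. is_gfa (Suc k) u' A' v' \<and>
           (\<forall>w. gfa_fun (Suc k) u' A' v' w = gfa_fun k u A v w - c)"
proof -
  define A' where "A' \<sigma> = four_block_mat (A \<sigma>) (0\<^sub>m k 1) (0\<^sub>m 1 k) (1\<^sub>m 1)" for \<sigma>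
  define u' where "u' = u @\<^sub>v vec 1 (\<lambda>_. 1)"
  define v' where "v' = v @\<^sub>v vec 1 (\<lambda>_. - c)"
  have u: "u \<in> carrier_vec k" and v: "v \<in> carrier_vec k" and A: "\<And>\<sigma>. A \<sigma> \<in> carrier_mat k k"
    using assms by (auto simp: is_gfa_def)
  have A': "A' \<sigma> \<in> carrier_mat (Suc k) (Suc k)" for \<sigma>
    using four_block_carrier_mat[OF A one_carrier_mat[of 1]] by (simp add: A'_def)
  have u': "u' \<in> carrier_vec (Suc k)"
    using append_carrier_vec[OF u, of "vec 1 (\<lambda>_. 1)" 1] by (simp add: u'_def)
  have v': "v' \<in> carrier_vec (Suc k)"
    using append_carrier_vec[OF v, of "vec 1 (\<lambda>_. - c)" 1] by (simp add: v'_def)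
  have gfa': "is_gfa (Suc k) u' A' v'"
    using u' v' A' by (simp add: is_gfa_def)
  have run: "word_prod (Suc k) A' w *\<^sub>v v' = (word_prod k A w *\<^sub>v v) @\<^sub>v vec 1 (\<lambda>_. - c)" for w
  proof (induction w)
    case Nil
    have "1\<^sub>m (Suc k) *\<^sub>v v' = v'"
      using v' by simp
    then show ?case using v by (simp add: v'_def)
  next
    case (Cons \<sigma> w)
    have W: "word_prod k A w *\<^sub>v v \<in> carrier_vec k"
      using word_prod_carrier[of A k w] A v by simp
    have "word_prod (Suc k) A' (\<sigma> # w) *\<^sub>v v' = A' \<sigma> *\<^sub>v ((word_prod k A w *\<^sub>v v) @\<^sub>v vec 1 (\<lambda>_. - c))"
      using A' v' by (simp only: word_prod_Cons_mult_vec Cons.IH)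
    also have "\<dots> = (A \<sigma> *\<^sub>v (word_prod k A w *\<^sub>v v)) @\<^sub>v vec 1 (\<lambda>_. - c)"
      unfolding A'_def using mult_mat_vec_split[OF A one_carrier_mat W, of "vec 1 (\<lambda>_. - c)"] by simp
    also have "\<dots> = (word_prod k A (\<sigma> # w) *\<^sub>v v) @\<^sub>v vec 1 (\<lambda>_. - c)"
      using A v by (simp only: word_prod_Cons_mult_vec)
    finally show ?case .
  qed
  have "gfa_fun (Suc k) u' A' v' w = gfa_fun k u A v w - c" for w
  proof -
    have "word_prod k A w \<in> carrier_mat k k"
      using A by (rule word_prod_carrier)
    then show ?thesis
      using u v unfolding gfa_fun_def run u'_def
      by (simp add: scalar_prod_append[of _ k _ 1] scalar_prod_def)
  qed
  with gfa' show ?thesis by blast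
qed

locale gfa_simulation =
  fixes m :: nat and u v :: "real vec" and B :: "'a::finite \<Rightarrow> real mat"
  assumes gfa: "is_gfa m u B v"
begin

text \<open>The PFA has states \<open>0..<2*m+2\<close>: \<open>signed_copies x\<close> puts \<open>x\<close> on the states \<open>i < m\<close>
  and \<open>-x\<close> on the states \<open>m + i\<close>; state \<open>2*m\<close> is an absorbing rejecting sink and \<open>2*m+1\<close>
  the accepting state.\<close>

definition copy_sign :: "nat \<Rightarrow> real" where
  "copy_sign i = (if i < m then 1 else -1)"

definition signed_copies :: "real vec \<Rightarrow> real vec" where
  "signed_copies x = vec (2*m+2) (\<lambda>i. if i < 2*m then copy_sign i * x $ (i mod m) else 0)"

definition scale :: real where
  "scale = 1 + (\<Sum>\<sigma>\<in>UNIV. \<Sum>i<m. \<Sum>j<m. \<bar>B \<sigma> $$ (i, j)\<bar>)"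

definition step_mat :: "'a \<Rightarrow> real mat" where
  "step_mat \<sigma> = mat (2*m+2) (2*m+2) (\<lambda>(i, j).
     if i < 2*m then
       if j < 2*m then max (copy_sign i * copy_sign j * B \<sigma> $$ (i mod m, j mod m)) 0 / scale
       else if j = 2*m then 1 - (\<Sum>l<m. \<bar>B \<sigma> $$ (i mod m, l)\<bar>) / scale
       else 0
     else if i = j then 1 else 0)"

definition gain :: real where
  "gain = 1 / (2 * (1 + (\<Sum>i<m. \<bar>v $ i\<bar>)))"

definition end_mat :: "real mat" where
  "end_mat = mat (2*m+2) (2*m+2) (\<lambda>(i, j).
     if j = 2*m+1 then 1/2 + gain * signed_copies v $ i
     else if j = 2*m then 1/2 - gain * signed_copies v $ i
     else 0)"

definition weight :: real where
  "weight = 1 / (1 + (\<Sum>i<m. \<bar>u $ i\<bar>))"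

definition init_vec :: "real vec" where
  "init_vec = vec (2*m+2) (\<lambda>i.
     if i < 2*m then weight * max (copy_sign i * u $ (i mod m)) 0
     else if i = 2*m then 1 - weight * (\<Sum>l<m. \<bar>u $ l\<bar>)
     else 0)"

lemma gfa_carriers: "u \<in> carrier_vec m" "v \<in> carrier_vec m" "B \<sigma> \<in> carrier_mat m m"
  using gfa by (auto simp: is_gfa_def)

lemma dim_signed_copies [simp]: "dim_vec (signed_copies x) = 2*m+2"
  by (simp add: signed_copies_def)

lemma sum_over_copies:
  "(\<Sum>j<2*m. f (copy_sign j) (j mod m)) = (\<Sum>j<m. f 1 j + f (-1) j)"
  using sum_lessThan_add_split[of "\<lambda>j. f (copy_sign j) (j mod m)" m m]
  by (simp add: mult_2 copy_sign_def sum.distrib)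

lemma sum_lessThan_states:
  "(\<Sum>j<2*m+2. f j) = (\<Sum>j<2*m. f j) + f (2*m) + f (2*m+1)"
  using sum_lessThan_add_split[of f "2*m" 2] by (simp add: numeral_2_eq_2)

lemma copy_sign_cases: "copy_sign i = 1 \<or> copy_sign i = -1"
  by (simp add: copy_sign_def)

lemma scale_ge_one: "scale \<ge> 1"
  unfolding scale_def by (simp add: sum_nonneg)

lemma row_abs_sum_le_scale:
  assumes "i < m"
  shows "(\<Sum>l<m. \<bar>B \<sigma> $$ (i, l)\<bar>) \<le> scale - 1"
proof -
  have "(\<Sum>l<m. \<bar>B \<sigma> $$ (i, l)\<bar>) \<le> (\<Sum>i<m. \<Sum>l<m. \<bar>B \<sigma> $$ (i, l)\<bar>)"
    using assms by (intro member_le_sum) (auto intro: sum_nonneg)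
  also have "\<dots> \<le> (\<Sum>\<sigma>\<in>UNIV. \<Sum>i<m. \<Sum>l<m. \<bar>B \<sigma> $$ (i, l)\<bar>)"
    by (intro member_le_sum) (auto intro: sum_nonneg)
  finally show ?thesis
    by (simp add: scale_def)
qed

lemma step_mat_row_stochastic: "row_stochastic (2*m+2) (step_mat \<sigma>)"
proof -
  have row_mod: "i mod m < m" if "i < 2*m" for i
    using that by simp
  have nonneg: "step_mat \<sigma> $$ (i, j) \<ge> 0" if "i < 2*m+2" "j < 2*m+2" for i j
    using that scale_ge_one row_abs_sum_le_scale[OF row_mod, of i \<sigma>]
    by (auto simp: step_mat_def field_simps)
  have row_sum: "(\<Sum>j<2*m+2. step_mat \<sigma> $$ (i, j)) = 1" if "i < 2*m+2" for i
  proof (cases "i < 2*m")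
    case True
    have "(\<Sum>j<2*m. step_mat \<sigma> $$ (i, j))
        = (\<Sum>j<2*m. max (copy_sign i * copy_sign j * B \<sigma> $$ (i mod m, j mod m)) 0 / scale)"
      using True by (simp add: step_mat_def)
    also have "\<dots> = (\<Sum>j<m. \<bar>B \<sigma> $$ (i mod m, j)\<bar> / scale)"
      using copy_sign_cases[of i]
      by (auto simp: sum_over_copies[where f = "\<lambda>s j. max (copy_sign i * s * B \<sigma> $$ (i mod m, j)) 0 / scale"]
          add_divide_distrib[symmetric] max_pos_neg_parts intro!: sum.cong)
    finally show ?thesis
      using True scale_ge_one
      by (simp add: sum_lessThan_states step_mat_def sum_divide_distrib[symmetric])
  next
    case False
    then show ?thesis
      using that by (simp add: sum_lessThan_states step_mat_def)
  qed
  show ?thesis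
    using nonneg row_sum by (simp add: row_stochastic_def step_mat_def)
qed

lemma step_mat_signed_copies:
  assumes x: "x \<in> carrier_vec m"
  shows "step_mat \<sigma> *\<^sub>v signed_copies x = (1 / scale) \<cdot>\<^sub>v signed_copies (B \<sigma> *\<^sub>v x)"
proof (rule eq_vecI)
  fix i assume "i < dim_vec ((1 / scale) \<cdot>\<^sub>v signed_copies (B \<sigma> *\<^sub>v x))"
  then have i: "i < 2*m+2"
    by (simp add: signed_copies_def)
  have entry: "(step_mat \<sigma> *\<^sub>v signed_copies x) $ i
      = (\<Sum>j<2*m+2. step_mat \<sigma> $$ (i, j) * signed_copies x $ j)"
    using i by (intro mult_vec_entry) (simp_all add: step_mat_def signed_copies_def)
  show "(step_mat \<sigma> *\<^sub>v signed_copies x) $ i = ((1 / scale) \<cdot>\<^sub>v signed_copies (B \<sigma> *\<^sub>v x)) $ i"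
  proof (cases "i < 2*m")
    case True
    have "(\<Sum>j<2*m. step_mat \<sigma> $$ (i, j) * signed_copies x $ j)
        = (\<Sum>j<2*m. max (copy_sign i * copy_sign j * B \<sigma> $$ (i mod m, j mod m)) 0 / scale
             * (copy_sign j * x $ (j mod m)))"
      using True by (simp add: step_mat_def signed_copies_def)
    also have "\<dots> = (\<Sum>j<m. (max (copy_sign i * B \<sigma> $$ (i mod m, j)) 0
                           - max (- (copy_sign i * B \<sigma> $$ (i mod m, j))) 0) * x $ j / scale)"
      by (subst sum_over_copies[where f = "\<lambda>s j. max (copy_sign i * s * B \<sigma> $$ (i mod m, j)) 0 / scale * (s * x $ j)"])
         (simp add: diff_divide_distrib algebra_simps)
    also have "\<dots> = (\<Sum>j<m. copy_sign i * B \<sigma> $$ (i mod m, j) * x $ j / scale)"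
      by (simp only: max_pos_neg_parts)
    also have "\<dots> = copy_sign i * (B \<sigma> *\<^sub>v x) $ (i mod m) / scale"
      using True
      by (simp add: mult_vec_entry[OF gfa_carriers(3) x] sum_distrib_left sum_divide_distrib mult.assoc)
    finally show ?thesis
      using True entry gfa_carriers(3)[of \<sigma>]
      by (simp add: sum_lessThan_states step_mat_def signed_copies_def)
  next
    case False
    then show ?thesis
      using i entry by (simp add: sum_lessThan_states step_mat_def signed_copies_def)
  qed
qed (simp add: step_mat_def signed_copies_def)

lemma abs_signed_copies_le:
  assumes "i < 2*m+2"
  shows "\<bar>signed_copies x $ i\<bar> \<le> (\<Sum>l<m. \<bar>x $ l\<bar>)"
proof (cases "i < 2*m")
  case True
  then have "\<bar>x $ (i mod m)\<bar> \<le> (\<Sum>l<m. \<bar>x $ l\<bar>)"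
    by (intro member_le_sum) auto
  then show ?thesis
    using True copy_sign_cases[of i] by (auto simp: signed_copies_def)
qed (use assms in \<open>simp add: signed_copies_def sum_nonneg\<close>)

lemma end_mat_row_stochastic: "row_stochastic (2*m+2) end_mat"
proof -
  have "gain * \<bar>signed_copies v $ i\<bar> \<le> 1/2" if "i < 2*m+2" for i
  proof -
    have "0 \<le> (\<Sum>l<m. \<bar>v $ l\<bar>)"
      by (simp add: sum_nonneg)
    then show ?thesis
      using abs_signed_copies_le[OF that, of v] by (simp add: gain_def field_simps)
  qed
  then have bound: "\<bar>gain * signed_copies v $ i\<bar> \<le> 1/2" if "i < 2*m+2" for i
    using that by (simp add: abs_mult gain_def)
  have "0 \<le> 1/2 + gain * signed_copies v $ i" "0 \<le> 1/2 - gain * signed_copies v $ i"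
    if "i < 2*m+2" for i
    using bound[OF that] by (auto simp: abs_le_iff)
  then show ?thesis
    by (auto simp: row_stochastic_def end_mat_def sum_lessThan_states)
qed

lemma end_mat_accept:
  "end_mat *\<^sub>v indicator_vec (2*m+2) {2*m+1} = vec (2*m+2) (\<lambda>_. 1/2) + gain \<cdot>\<^sub>v signed_copies v"
proof (rule eq_vecI)
  fix i assume "i < dim_vec (vec (2*m+2) (\<lambda>_. 1/2) + gain \<cdot>\<^sub>v signed_copies v)"
  then have i: "i < 2*m+2"
    by simp
  then have "(end_mat *\<^sub>v indicator_vec (2*m+2) {2*m+1}) $ i
      = (\<Sum>j<2*m+2. end_mat $$ (i, j) * indicator_vec (2*m+2) {2*m+1} $ j)"
    by (intro mult_vec_entry) (simp_all add: end_mat_def indicator_vec_def)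
  then show "(end_mat *\<^sub>v indicator_vec (2*m+2) {2*m+1}) $ i
      = (vec (2*m+2) (\<lambda>_. 1/2) + gain \<cdot>\<^sub>v signed_copies v) $ i"
    using i by (simp add: sum_lessThan_states end_mat_def indicator_vec_def signed_copies_def)
qed (simp add: end_mat_def)

lemma init_vec_prob_vec: "prob_vec (2*m+2) init_vec"
proof -
  have S: "0 < 1 + (\<Sum>l<m. \<bar>u $ l\<bar>)"
    by (simp add: sum_nonneg add_pos_nonneg)
  have weight: "weight > 0" "weight * (\<Sum>l<m. \<bar>u $ l\<bar>) \<le> 1"
    using S by (simp_all add: weight_def field_simps)
  have "(\<Sum>i<2*m. weight * max (copy_sign i * u $ (i mod m)) 0) = weight * (\<Sum>l<m. \<bar>u $ l\<bar>)"
    by (subst sum_over_copies[where f = "\<lambda>s j. weight * max (s * u $ j) 0"])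
       (simp add: sum_distrib_left[symmetric] distrib_left[symmetric] max_pos_neg_parts)
  then have "(\<Sum>i<2*m+2. init_vec $ i) = 1"
    by (simp add: sum_lessThan_states init_vec_def)
  then show ?thesis
    using weight by (auto simp: prob_vec_def init_vec_def)
qed

lemma init_vec_signed_copies:
  assumes x: "x \<in> carrier_vec m"
  shows "init_vec \<bullet> signed_copies x = weight * (u \<bullet> x)"
proof -
  have "init_vec \<bullet> signed_copies x = (\<Sum>i<2*m+2. init_vec $ i * signed_copies x $ i)"
    by (simp add: scalar_prod_def signed_copies_def atLeast0LessThan)
  also have "\<dots> = (\<Sum>i<2*m. weight * max (copy_sign i * u $ (i mod m)) 0 * (copy_sign i * x $ (i mod m)))"
    by (simp add: sum_lessThan_states init_vec_def signed_copies_def)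
  also have "\<dots> = weight * (\<Sum>j<m. (max (u $ j) 0 - max (- u $ j) 0) * x $ j)"
    by (subst sum_over_copies[where f = "\<lambda>s j. weight * max (s * u $ j) 0 * (s * x $ j)"])
       (simp add: sum_distrib_left algebra_simps)
  also have "\<dots> = weight * (u \<bullet> x)"
    using x gfa_carriers(1) by (simp add: max_pos_neg_parts scalar_prod_def atLeast0LessThan)
  finally show ?thesis .
qed

lemma pfa_half_plus_pos_multiple_of_gfa:
  "\<exists>\<pi> P Pend F. is_pfa (2*m+2) \<pi> P Pend F \<and>
     (\<forall>w. \<exists>c>0. pfa_fun (2*m+2) \<pi> P Pend F w = 1/2 + c * gfa_fun m u B v w)"
proof -
  define z where "z w = signed_copies (word_prod m B w *\<^sub>v v)" for w
  have run: "word_prod m B w *\<^sub>v v \<in> carrier_vec m" for w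
    using word_prod_carrier[of B m w] gfa_carriers by simp
  have z_step: "step_mat \<sigma> *\<^sub>v z w = (1 / scale) \<cdot>\<^sub>v z (\<sigma> # w)" for \<sigma> w
    using gfa_carriers
    by (simp add: z_def step_mat_signed_copies[OF run] word_prod_Cons_mult_vec del: word_prod_Cons)
  have end_accept:
    "end_mat *\<^sub>v indicator_vec (2*m+2) {2*m+1} = vec (2*m+2) (\<lambda>_. 1/2) + gain \<cdot>\<^sub>v z []"
    using gfa_carriers end_mat_accept by (simp add: z_def)
  have acceptance: "pfa_fun (2*m+2) init_vec step_mat end_mat {2*m+1} w
      = 1/2 + gain * (1 / scale) ^ length w * weight * gfa_fun m u B v w" for w
    using pfa_fun_const_plus_scaled[OF init_vec_prob_vec step_mat_row_stochastic _ _ end_accept z_step]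
    by (simp add: end_mat_def carrier_vecI z_def init_vec_signed_copies[OF run] gfa_fun_def)
  have "gain * (1 / scale) ^ length w * weight > 0" for w
    using scale_ge_one by (simp add: gain_def weight_def sum_nonneg add_pos_nonneg)
  then have "\<forall>w. \<exists>c>0. pfa_fun (2*m+2) init_vec step_mat end_mat {2*m+1} w
      = 1/2 + c * gfa_fun m u B v w"
    using acceptance by blast
  moreover have "is_pfa (2*m+2) init_vec step_mat end_mat {2*m+1}"
    using init_vec_prob_vec step_mat_row_stochastic end_mat_row_stochastic by (simp add: is_pfa_def)
  ultimately show ?thesis
    by blast
qed

end

theorem theorem3p2:
  fixes k :: nat and u v :: "real vec" and A :: "'a::finite \<Rightarrow> real mat" and lam :: real
  assumes "is_gfa k u A v"
  shows "\<exists>n \<pi> (P :: 'a \<Rightarrow> real mat) Pend F. n \<le> 2 * k + 6 \<and> is_pfa n \<pi> P Pend F \<and>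
           (\<forall>w :: 'a list. pfa_fun n \<pi> P Pend F w > 1/2 \<longleftrightarrow> gfa_fun k u A v w > lam)"
proof -
  obtain u' A' v' where gfa': "is_gfa (Suc k) u' A' v'"
    and shifted: "\<And>w. gfa_fun (Suc k) u' A' v' w = gfa_fun k u A v w - lam"
    using gfa_shift_by_const[OF assms] by blast
  interpret gfa_simulation "Suc k" u' v' A'
    using gfa' by (rule gfa_simulation.intro)
  obtain \<pi> P Pend F where pfa: "is_pfa (2 * Suc k + 2) \<pi> P Pend F"
    and acceptance: "\<forall>w. \<exists>c>0. pfa_fun (2 * Suc k + 2) \<pi> P Pend F w
                                  = 1/2 + c * gfa_fun (Suc k) u' A' v' w"
    using pfa_half_plus_pos_multiple_of_gfa by blast
  have "pfa_fun (2 * Suc k + 2) \<pi> P Pend F w > 1/2 \<longleftrightarrow> gfa_fun k u A v w > lam" for w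
  proof -
    obtain c where "c > 0"
      and "pfa_fun (2 * Suc k + 2) \<pi> P Pend F w = 1/2 + c * (gfa_fun k u A v w - lam)"
      using acceptance shifted by metis
    then show ?thesis
      by (simp add: zero_less_mult_iff)
  qed
  then show ?thesis
    using pfa by (intro exI[of _ "2 * Suc k + 2"]) auto
qed

end
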